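(* Let $(A;R)\in\mathcal C$ and $C\subseteq A$ with $C\le A$. For a closed set $F$ of the restriction $(C,\mathrm{cl}_C)$ (where $\mathrm{cl}_C(X)=\mathrm{cl}(X)\cap C$) write $\tilde F=\mathrm{cl}(F)$, its closure in $PG(A;R)$. Then for any closed sets $F_1,F_2$ of $(C,\mathrm{cl}_C)$, $\tilde F_1\cap\tilde F_2=\mathrm{cl}(F_1\cap F_2)$.
   Context: A set system is a pair $(A;R)$ where $R$ is a set of finite non-empty subsets of $A$; for $X\subseteq A$, $R[X]=\{r\in R:r\subseteq X\}$ and $\delta(X)=|X|-|R[X]|$. $\mathcal C$ is the class of finite set systems with $\delta(X)\ge0$ for all $X\subseteq A$. $X\le A$ means $\delta(X)\le\delta(X')$ for all $X\subseteq X'\subseteq A$. $d(X)=\min\{\delta(Y):X\subseteq Y\subseteq A\}$, $\mathrm{cl}(X)=\{y:d(X\cup\{y\})=d(X)\}$, and $PG(A;R)$ is the matroid $(A,\mathrm{cl})$; a closed set of a pregeometry is a set equal to its own closure. *)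

theory Defs
  imports Main
begin

definition Rsub :: "'a set set \<Rightarrow> 'a set \<Rightarrow> 'a set set" where
  "Rsub R X = {r \<in> R. r \<subseteq> X}"

definition delta :: "'a set set \<Rightarrow> 'a set \<Rightarrow> int" where
  "delta R X = int (card X) - int (card (Rsub R X))"

definition in_C :: "'a set \<Rightarrow> 'a set set \<Rightarrow> bool" where
  "in_C A R \<longleftrightarrow> finite A \<and> (\<forall>r\<in>R. finite r \<and> r \<noteq> {} \<and> r \<subseteq> A)
     \<and> (\<forall>X. X \<subseteq> A \<longrightarrow> delta R X \<ge> 0)"

definition selfsuff :: "'a set \<Rightarrow> 'a set set \<Rightarrow> 'a set \<Rightarrow> bool" where
  "selfsuff A R X \<longleftrightarrow> X \<subseteq> A \<and> (\<forall>X'. X \<subseteq> X' \<and> X' \<subseteq> A \<longrightarrow> delta R X \<le> delta R X')"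

definition dim :: "'a set \<Rightarrow> 'a set set \<Rightarrow> 'a set \<Rightarrow> int" where
  "dim A R X = Min (delta R ` {Y. X \<subseteq> Y \<and> Y \<subseteq> A})"

definition cl :: "'a set \<Rightarrow> 'a set set \<Rightarrow> 'a set \<Rightarrow> 'a set" where
  "cl A R X = {y \<in> A. dim A R (X \<union> {y}) = dim A R X}"

definition closed_restr :: "'a set \<Rightarrow> 'a set set \<Rightarrow> 'a set \<Rightarrow> 'a set \<Rightarrow> bool" where
  "closed_restr A R C F \<longleftrightarrow> F \<subseteq> C \<and> cl A R F \<inter> C = F"

end

theory Submission
  imports Defs
begin

(* The predimension delta is submodular: delta(X \<union> Y) + delta(X \<inter> Y)
   falls short of delta X + delta Y by exactly the number of relations that cross
   between X and Y.  From this, cl X is the largest superset of X realising the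
   dimension d(X), and cl is monotone.  For C \<le> A we get delta(X \<inter> C) \<le> delta X,
   so a closed set F of the restriction (i.e. cl F \<inter> C = F) satisfies
   delta F = d(F) = delta(cl F); consequently no relation crosses between cl F and C.
   For closed F1, F2 with G = F1 \<inter> F2 and H = cl F1 \<inter> cl F2 this absence of
   crossing relations gives delta H \<le> delta G = d(G), so H \<subseteq> cl G by maximality
   of the closure; the converse inclusion cl G \<subseteq> H is monotonicity. *)

definition crossing :: "'a set set \<Rightarrow> 'a set \<Rightarrow> 'a set \<Rightarrow> 'a set set" where
  "crossing R X Y = {r \<in> R. r \<subseteq> X \<union> Y \<and> \<not> r \<subseteq> X \<and> \<not> r \<subseteq> Y}"

lemma in_C_finite_relations: "in_C A R \<Longrightarrow> finite R"
  unfolding in_C_def by (meson PowI finite_Pow_iff rev_finite_subset subsetI)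

lemma in_C_finite: "in_C A R \<Longrightarrow> finite A"
  unfolding in_C_def by blast

lemma in_C_finite_subset: "in_C A R \<Longrightarrow> X \<subseteq> A \<Longrightarrow> finite X"
  using in_C_finite rev_finite_subset by blast

lemma delta_modular:
  assumes "in_C A R" "X \<subseteq> A" "Y \<subseteq> A"
  shows "delta R (X \<union> Y) + delta R (X \<inter> Y) + int (card (crossing R X Y))
           = delta R X + delta R Y"
proof -
  have fin: "finite X" "finite Y" using in_C_finite_subset assms by auto
  have finR: "finite (Rsub R X)" "finite (Rsub R Y)" "finite (crossing R X Y)"
    using in_C_finite_relations[OF assms(1)] unfolding Rsub_def crossing_def by auto
  have split: "Rsub R (X \<union> Y) = (Rsub R X \<union> Rsub R Y) \<union> crossing R X Y"
    and disj: "(Rsub R X \<union> Rsub R Y) \<inter> crossing R X Y = {}"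
    and meet: "Rsub R X \<inter> Rsub R Y = Rsub R (X \<inter> Y)"
    unfolding Rsub_def crossing_def by blast+
  have "card (X \<union> Y) + card (X \<inter> Y) = card X + card Y"
    using card_Un_Int fin by metis
  moreover have "card (Rsub R (X \<union> Y)) = card (Rsub R X \<union> Rsub R Y) + card (crossing R X Y)"
    unfolding split using card_Un_disjoint[OF _ finR(3) disj] finR by auto
  moreover have "card (Rsub R X \<union> Rsub R Y) + card (Rsub R (X \<inter> Y))
                   = card (Rsub R X) + card (Rsub R Y)"
    unfolding meet[symmetric] using card_Un_Int finR by metis
  ultimately show ?thesis unfolding delta_def by linarith
qed

lemma delta_submodular:
  assumes "in_C A R" "X \<subseteq> A" "Y \<subseteq> A"
  shows "delta R (X \<union> Y) + delta R (X \<inter> Y) \<le> delta R X + delta R Y"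
  using delta_modular[OF assms] by linarith

lemma dim_attained:
  assumes "in_C A R" "X \<subseteq> A"
  shows "\<exists>Y. X \<subseteq> Y \<and> Y \<subseteq> A \<and> delta R Y = dim A R X"
    and "\<And>Y. X \<subseteq> Y \<Longrightarrow> Y \<subseteq> A \<Longrightarrow> dim A R X \<le> delta R Y"
proof -
  have "finite {Y. Y \<subseteq> A}" using in_C_finite[OF assms(1)] by simp
  then have fin: "finite (delta R ` {Y. X \<subseteq> Y \<and> Y \<subseteq> A})"
    by (rule finite_surj[where f = "delta R"]) auto
  have ne: "delta R ` {Y. X \<subseteq> Y \<and> Y \<subseteq> A} \<noteq> {}" using assms(2) by blast
  have "dim A R X \<in> delta R ` {Y. X \<subseteq> Y \<and> Y \<subseteq> A}"
    unfolding dim_def using fin ne by (rule Min_in)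
  then show "\<exists>Y. X \<subseteq> Y \<and> Y \<subseteq> A \<and> delta R Y = dim A R X" by auto
  show "\<And>Y. X \<subseteq> Y \<Longrightarrow> Y \<subseteq> A \<Longrightarrow> dim A R X \<le> delta R Y"
    unfolding dim_def using fin by (intro Min_le) auto
qed

lemma dim_le_delta:
  assumes "in_C A R" "X \<subseteq> Y" "Y \<subseteq> A"
  shows "dim A R X \<le> delta R Y"
  using dim_attained(2)[of A R X Y] assms by auto

text \<open>d is monotone, since a superset of \<open>X'\<close> is also a superset of \<open>X\<close>.\<close>
lemma dim_mono:
  assumes "in_C A R" "X \<subseteq> X'" "X' \<subseteq> A"
  shows "dim A R X \<le> dim A R X'"
proof -
  obtain Y where "X' \<subseteq> Y" "Y \<subseteq> A" "delta R Y = dim A R X'"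
    using dim_attained(1)[OF assms(1,3)] by auto
  then show ?thesis using dim_le_delta[OF assms(1), of X Y] assms by auto
qed

lemma mem_cl_iff:
  assumes "in_C A R" "X \<subseteq> A"
  shows "y \<in> cl A R X \<longleftrightarrow> y \<in> A \<and> (\<exists>Y. X \<union> {y} \<subseteq> Y \<and> Y \<subseteq> A \<and> delta R Y = dim A R X)"
proof
  assume "y \<in> cl A R X"
  then have "y \<in> A" "dim A R (X \<union> {y}) = dim A R X" unfolding cl_def by auto
  then show "y \<in> A \<and> (\<exists>Y. X \<union> {y} \<subseteq> Y \<and> Y \<subseteq> A \<and> delta R Y = dim A R X)"
    using dim_attained(1)[OF assms(1), of "X \<union> {y}"] assms(2) by auto
next
  assume "y \<in> A \<and> (\<exists>Y. X \<union> {y} \<subseteq> Y \<and> Y \<subseteq> A \<and> delta R Y = dim A R X)"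
  then obtain Y where Y: "y \<in> A" "X \<union> {y} \<subseteq> Y" "Y \<subseteq> A" "delta R Y = dim A R X" by blast
  have "dim A R (X \<union> {y}) \<le> dim A R X" using dim_le_delta[OF assms(1) Y(2,3)] Y(4) by simp
  moreover have "dim A R X \<le> dim A R (X \<union> {y})"
    using dim_mono[OF assms(1), of X "X \<union> {y}"] Y by auto
  ultimately show "y \<in> cl A R X" unfolding cl_def using Y by auto
qed

lemma subset_cl:
  assumes "X \<subseteq> A"
  shows "X \<subseteq> cl A R X"
  unfolding cl_def using assms by (auto simp: insert_absorb)

lemma cl_subset: "cl A R X \<subseteq> A"
  unfolding cl_def by auto

lemma subset_clI:
  assumes "in_C A R" "X \<subseteq> Y" "Y \<subseteq> A" "delta R Y \<le> dim A R X"
  shows "Y \<subseteq> cl A R X"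
proof
  fix y assume "y \<in> Y"
  moreover have "delta R Y = dim A R X" using dim_le_delta[OF assms(1-3)] assms(4) by simp
  ultimately show "y \<in> cl A R X" using mem_cl_iff[OF assms(1), of X y] assms(2,3) by auto
qed

text \<open>By submodularity, the union of two d(X)-realising supersets of \<open>X\<close> realises d(X).\<close>
lemma dim_realising_Un:
  assumes "in_C A R" "X \<subseteq> Y" "Y \<subseteq> A" "delta R Y = dim A R X"
    and "X \<subseteq> Z" "Z \<subseteq> A" "delta R Z = dim A R X"
  shows "delta R (Y \<union> Z) = dim A R X"
proof -
  have "dim A R X \<le> delta R (Y \<inter> Z)" "dim A R X \<le> delta R (Y \<union> Z)"
    using dim_le_delta[OF assms(1), of X "Y \<inter> Z"] dim_le_delta[OF assms(1), of X "Y \<union> Z"]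
      assms by auto
  then show ?thesis using delta_submodular[OF assms(1) assms(3) assms(6)] assms(4,7) by linarith
qed

text \<open>The closure itself realises d(X): it is a \<open>\<subseteq>\<close>-maximal d(X)-realising superset of \<open>X\<close>.\<close>
lemma delta_cl:
  assumes "in_C A R" "X \<subseteq> A"
  shows "delta R (cl A R X) = dim A R X"
proof -
  define M where "M = {Y. X \<subseteq> Y \<and> Y \<subseteq> A \<and> delta R Y = dim A R X}"
  have "M \<subseteq> Pow A" unfolding M_def by blast
  then have fin: "finite M" using in_C_finite[OF assms(1)] by (meson finite_Pow_iff rev_finite_subset)
  have ne: "M \<noteq> {}" unfolding M_def using dim_attained(1)[OF assms] by blast
  obtain Z where Z: "Z \<in> M" and Zmax: "\<forall>Y\<in>M. Z \<subseteq> Y \<longrightarrow> Z = Y"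
    using finite_has_maximal[OF fin ne] by blast
  have ZM: "X \<subseteq> Z" "Z \<subseteq> A" "delta R Z = dim A R X" using Z unfolding M_def by blast+
  have "cl A R X \<subseteq> Z"
  proof
    fix y assume "y \<in> cl A R X"
    then obtain Y where Y: "X \<union> {y} \<subseteq> Y" "Y \<subseteq> A" "delta R Y = dim A R X"
      using mem_cl_iff[OF assms] by blast
    have "delta R (Z \<union> Y) = dim A R X"
      using dim_realising_Un[OF assms(1) ZM] Y by blast
    then have "Z \<union> Y \<in> M" unfolding M_def using ZM Y by blast
    then have "Z = Z \<union> Y" using Zmax by blast
    then show "y \<in> Z" using Y by auto
  qed
  moreover have "Z \<subseteq> cl A R X" using subset_clI[OF assms(1) ZM(1,2)] ZM(3) by simp
  ultimately show ?thesis using ZM(3) by auto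
qed

text \<open>Monotonicity of the closure: the union of \<open>cl X\<close> and \<open>cl X'\<close> still realises d(X').\<close>
lemma cl_mono:
  assumes "in_C A R" "X \<subseteq> X'" "X' \<subseteq> A"
  shows "cl A R X \<subseteq> cl A R X'"
proof -
  let ?K = "cl A R X" and ?K' = "cl A R X'"
  have XA: "X \<subseteq> A" using assms by auto
  have K: "X \<subseteq> ?K" "?K \<subseteq> A" "X' \<subseteq> ?K'" "?K' \<subseteq> A"
    using subset_cl[OF XA] subset_cl[OF assms(3)] cl_subset[of A R X] cl_subset[of A R X'] by auto
  have "dim A R X \<le> delta R (?K \<inter> ?K')"
    using dim_le_delta[OF assms(1), of X "?K \<inter> ?K'"] K assms(2) by blast
  then have "delta R (?K \<union> ?K') \<le> dim A R X'"
    using delta_submodular[OF assms(1) K(2,4)] delta_cl[OF assms(1) XA] delta_cl[OF assms(1,3)]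
    by linarith
  then have "?K \<union> ?K' \<subseteq> ?K'" using subset_clI[OF assms(1), of X' "?K \<union> ?K'"] K by auto
  then show ?thesis by blast
qed

lemma selfsuff_le:
  "selfsuff A R C \<Longrightarrow> C \<subseteq> X \<Longrightarrow> X \<subseteq> A \<Longrightarrow> delta R C \<le> delta R X"
  unfolding selfsuff_def by blast

lemma delta_Int_selfsuff:
  assumes "in_C A R" "selfsuff A R C" "X \<subseteq> A"
  shows "delta R (X \<inter> C) \<le> delta R X"
proof -
  have CA: "C \<subseteq> A" using assms(2) by (simp add: selfsuff_def)
  have "delta R C \<le> delta R (X \<union> C)" using selfsuff_le[OF assms(2)] CA assms(3) by simp
  then show ?thesis using delta_submodular[OF assms(1) assms(3) CA] by linarith
qed

lemma delta_eq_dim_if_closed_restr: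
  assumes "in_C A R" "selfsuff A R C" "X \<subseteq> A" "cl A R X \<inter> C = X"
  shows "delta R X = dim A R X"
  using delta_Int_selfsuff[OF assms(1,2) cl_subset[of A R X]] assms(4) delta_cl[OF assms(1,3)]
    dim_le_delta[OF assms(1) order_refl assms(3)] by simp

lemma no_crossing_with_selfsuff:
  assumes "in_C A R" "selfsuff A R C" "K \<subseteq> A" "delta R (K \<inter> C) = delta R K"
  shows "crossing R K C = {}" and "delta R (K \<union> C) = delta R C"
proof -
  have CA: "C \<subseteq> A" using assms(2) by (simp add: selfsuff_def)
  have "delta R C \<le> delta R (K \<union> C)" using selfsuff_le[OF assms(2)] assms(3) CA by simp
  then have "int (card (crossing R K C)) \<le> 0" and "delta R (K \<union> C) \<le> delta R C"
    using delta_modular[OF assms(1,3) CA] assms(4) by linarith+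
  moreover have "finite (crossing R K C)"
    using in_C_finite_relations[OF assms(1)] unfolding crossing_def by auto
  ultimately show "crossing R K C = {}" and "delta R (K \<union> C) = delta R C"
    using \<open>delta R C \<le> delta R (K \<union> C)\<close> by auto
qed

lemma crossing_transfer:
  assumes "F \<subseteq> C" "H \<subseteq> K" "K \<inter> F \<subseteq> H" "C \<inter> H \<subseteq> F"
  shows "crossing R F H \<subseteq> crossing R K C"
proof
  fix r assume "r \<in> crossing R F H"
  then have r: "r \<in> R" "r \<subseteq> F \<union> H" "\<not> r \<subseteq> F" "\<not> r \<subseteq> H" unfolding crossing_def by auto
  have "\<not> r \<subseteq> K" using r(2,4) assms(3) by blast
  moreover have "\<not> r \<subseteq> C" using r(2,3) assms(4) by blast
  ultimately show "r \<in> crossing R K C" using r(1,2) assms(1,2) unfolding crossing_def by blast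
qed

text \<open>Submodularity for \<open>K\<^sub>2\<close> and \<open>K\<^sub>1 \<union> C\<close> bounds \<open>delta (F\<^sub>2 \<union> H)\<close> by \<open>delta F\<^sub>2\<close>; as no relation
  crosses between \<open>F\<^sub>2\<close> and \<open>H\<close>, modularity then gives the claim.\<close>
lemma delta_Int_le:
  assumes iC: "in_C A R" and ss: "selfsuff A R C"
    and K1: "K1 \<subseteq> A" "F1 \<subseteq> K1" "K1 \<inter> C = F1" "delta R F1 = delta R K1"
    and K2: "K2 \<subseteq> A" "F2 \<subseteq> K2" "K2 \<inter> C = F2" "delta R F2 = delta R K2"
  shows "delta R (K1 \<inter> K2) \<le> delta R (F1 \<inter> F2)"
proof -
  let ?H = "K1 \<inter> K2"
  have CA: "C \<subseteq> A" using ss by (simp add: selfsuff_def)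
  note no_cross = no_crossing_with_selfsuff[OF iC ss K1(1)] K1(3,4)
  have "delta R C \<le> delta R (K2 \<union> (K1 \<union> C))"
    by (rule selfsuff_le[OF ss]) (use K1(1) K2(1) CA in auto)
  moreover have "K2 \<inter> (K1 \<union> C) = F2 \<union> ?H" using K2(3) by blast
  ultimately have F2H: "delta R (F2 \<union> ?H) \<le> delta R F2"
    using delta_submodular[OF iC K2(1), of "K1 \<union> C"] K1(1) CA K2(4) no_cross by auto
  have "crossing R F2 ?H \<subseteq> crossing R K1 C"
    by (rule crossing_transfer) (use K1(3) K2(2,3) in blast)+
  then have "crossing R F2 ?H = {}" using no_cross by auto
  moreover have "F2 \<inter> ?H = F1 \<inter> F2" using K1(3) K2(2,3) by blast
  moreover have "F2 \<subseteq> A" "?H \<subseteq> A" using K1(1) K2(1,2) by auto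
  ultimately show ?thesis using delta_modular[OF iC, of F2 ?H] F2H by simp
qed

theorem theorem6p5:
  fixes A C F1 F2 :: "'a set" and R :: "'a set set"
  assumes "in_C A R"
    and "C \<subseteq> A"
    and "selfsuff A R C"
    and "closed_restr A R C F1"
    and "closed_restr A R C F2"
  shows "cl A R F1 \<inter> cl A R F2 = cl A R (F1 \<inter> F2)"
proof -
  have F: "F1 \<subseteq> C" "cl A R F1 \<inter> C = F1" "F2 \<subseteq> C" "cl A R F2 \<inter> C = F2"
    using assms(4,5) unfolding closed_restr_def by auto
  then have FA: "F1 \<subseteq> A" "F2 \<subseteq> A" "F1 \<inter> F2 \<subseteq> A" using assms(2) by auto
  have self: "delta R F = delta R (cl A R F)" if "F \<subseteq> A" "cl A R F \<inter> C = F" for F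
    using delta_eq_dim_if_closed_restr[OF assms(1,3) that] delta_cl[OF assms(1) that(1)] by simp
  have cl_G: "cl A R (F1 \<inter> F2) \<subseteq> cl A R F1 \<inter> cl A R F2"
    using cl_mono[OF assms(1) _ FA(1)] cl_mono[OF assms(1) _ FA(2)] by auto
  then have "cl A R (F1 \<inter> F2) \<inter> C = F1 \<inter> F2" using F subset_cl[OF FA(3)] by blast
  then have dim_G: "delta R (F1 \<inter> F2) = dim A R (F1 \<inter> F2)"
    using delta_eq_dim_if_closed_restr[OF assms(1,3) FA(3)] by simp
  have "delta R (cl A R F1 \<inter> cl A R F2) \<le> delta R (F1 \<inter> F2)"
    using delta_Int_le[OF assms(1,3) cl_subset subset_cl[OF FA(1)] F(2) self[OF FA(1) F(2)]
        cl_subset subset_cl[OF FA(2)] F(4) self[OF FA(2) F(4)]] .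
  moreover have "F1 \<inter> F2 \<subseteq> cl A R F1 \<inter> cl A R F2" using subset_cl[OF FA(3)] cl_G by blast
  moreover have "cl A R F1 \<inter> cl A R F2 \<subseteq> A" using cl_subset[of A R F1] by blast
  ultimately have "cl A R F1 \<inter> cl A R F2 \<subseteq> cl A R (F1 \<inter> F2)"
    using subset_clI[OF assms(1)] dim_G by simp
  with cl_G show ?thesis by blast
qed

end
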